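(* Let $H$ be a connected graph, $G_n$ a graph, $p_n\in(0,1)$ with $\mathrm{Var}[T(H,G_n)]>0$, and $M>0$. Then (a) $\mathbb P(T(H,G_n)\ne T_M^\circ(H,G_n))\le\frac{2^{|V(H)|}-1}{M(1-p_n)}$; (b) $\frac{1}{\sqrt{\mathrm{Var}[T(H,G_n)]}}\mathbb E|T(H,G_n)-T_M^\circ(H,G_n)|\le\frac{2^{|V(H)|}-1}{\sqrt M(1-p_n)}$.
   Context: $G_n$ is a simple labeled graph on $V(G_n)=\{1,\dots,|V(G_n)|\}$ with adjacency $(a_{ij})$; $H=(V(H),E(H))$ with $|Aut(H)|$ automorphisms. $V(G_n)_k$ is the set of $k$-tuples of distinct vertices, $\bar{\mathbf s}$ the set of entries. $M_H(\mathbf s)=\prod_{(i,j)\in E(H)}a_{s_is_j}$, $t_H(A)=\frac1{|Aut(H)|}\sum_{\mathbf s:\bar{\mathbf s}\supseteq A}M_H(\mathbf s)$. $\{X_v\}$ i.i.d. Bernoulli$(p_n)$, $X_{\mathbf s}=\prod_uX_{s_u}$, $T(H,G_n)=\frac1{|Aut(H)|}\sum_{\mathbf s}M_H(\mathbf s)X_{\mathbf s}$. For $M>0$, $\mathcal C_M(A)$ is the condition $t_H(A)^2>Mp_n^{2|A|-2|V(H)|}\mathrm{Var}[T(H,G_n)]$, and $\mathbf 1\{\mathcal C_M(\mathbf s)\}=1$ iff $\mathcal C_M(A)$ fails for all nonempty $A\subseteq\bar{\mathbf s}$. $T_M^\circ(H,G_n)=\frac1{|Aut(H)|}\sum_{\mathbf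 s\in V(G_n)_{|V(H)|}}M_H(\mathbf s)X_{\mathbf s}\mathbf 1\{\mathcal C_M(\mathbf s)\}$. *)

theory Defs
  imports "HOL-Probability.Probability" "HOL-Library.FuncSet"
begin

definition simple_graph :: "'a set \<Rightarrow> ('a \<Rightarrow> 'a \<Rightarrow> bool) \<Rightarrow> bool" where
  "simple_graph V adj \<longleftrightarrow> (\<forall>x y. adj x y \<longrightarrow> x \<in> V \<and> y \<in> V \<and> x \<noteq> y \<and> adj y x)"

definition connected_graph :: "'a set \<Rightarrow> ('a \<Rightarrow> 'a \<Rightarrow> bool) \<Rightarrow> bool" where
  "connected_graph V adj \<longleftrightarrow> V \<noteq> {} \<and> (\<forall>x\<in>V. \<forall>y\<in>V. adj\<^sup>*\<^sup>* x y)"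

(* H has vertex set {0..<k}, adjacency adjH; G_n has vertex set {1..N}, adjacency adjG. *)

(* V(G_n)_k : k-tuples of distinct vertices, as injective maps {0..<k} -> {1..N} *)
definition vtuples :: "nat \<Rightarrow> nat \<Rightarrow> (nat \<Rightarrow> nat) set" where
  "vtuples N k = {s \<in> {0..<k} \<rightarrow>\<^sub>E {1..N}. inj_on s {0..<k}}"

definition edgesH :: "nat \<Rightarrow> (nat \<Rightarrow> nat \<Rightarrow> bool) \<Rightarrow> (nat \<times> nat) set" where
  "edgesH k adjH = {(i,j). i < j \<and> j < k \<and> adjH i j}"

definition adjmat :: "(nat \<Rightarrow> nat \<Rightarrow> bool) \<Rightarrow> nat \<Rightarrow> nat \<Rightarrow> real" where
  "adjmat adjG i j = (if adjG i j then 1 else 0)"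

definition MH :: "nat \<Rightarrow> (nat \<Rightarrow> nat \<Rightarrow> bool) \<Rightarrow> (nat \<Rightarrow> nat \<Rightarrow> bool) \<Rightarrow> (nat \<Rightarrow> nat) \<Rightarrow> real" where
  "MH k adjH adjG s = (\<Prod>(i,j)\<in>edgesH k adjH. adjmat adjG (s i) (s j))"

definition autH :: "nat \<Rightarrow> (nat \<Rightarrow> nat \<Rightarrow> bool) \<Rightarrow> (nat \<Rightarrow> nat) set" where
  "autH k adjH = {\<sigma> \<in> {0..<k} \<rightarrow>\<^sub>E {0..<k}. bij_betw \<sigma> {0..<k} {0..<k} \<and>
      (\<forall>i<k. \<forall>j<k. adjH i j \<longleftrightarrow> adjH (\<sigma> i) (\<sigma> j))}"

definition nAut :: "nat \<Rightarrow> (nat \<Rightarrow> nat \<Rightarrow> bool) \<Rightarrow> real" where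
  "nAut k adjH = real (card (autH k adjH))"

definition tH :: "nat \<Rightarrow> nat \<Rightarrow> (nat \<Rightarrow> nat \<Rightarrow> bool) \<Rightarrow> (nat \<Rightarrow> nat \<Rightarrow> bool) \<Rightarrow> nat set \<Rightarrow> real" where
  "tH N k adjH adjG A = (1 / nAut k adjH) *
     (\<Sum>s\<in>{s \<in> vtuples N k. A \<subseteq> s ` {0..<k}}. MH k adjH adjG s)"

(* X_s = prod_u X_{s_u}, with omega v the value of X_v *)
definition Xs :: "nat \<Rightarrow> (nat \<Rightarrow> bool) \<Rightarrow> (nat \<Rightarrow> nat) \<Rightarrow> real" where
  "Xs k \<omega> s = (\<Prod>u<k. if \<omega> (s u) then 1 else 0)"

definition TH :: "nat \<Rightarrow> nat \<Rightarrow> (nat \<Rightarrow> nat \<Rightarrow> bool) \<Rightarrow> (nat \<Rightarrow> nat \<Rightarrow> bool) \<Rightarrow> (nat \<Rightarrow> bool) \<Rightarrow> real" where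
  "TH N k adjH adjG \<omega> = (1 / nAut k adjH) *
     (\<Sum>s\<in>vtuples N k. MH k adjH adjG s * Xs k \<omega> s)"

definition Xpmf :: "nat \<Rightarrow> real \<Rightarrow> (nat \<Rightarrow> bool) pmf" where
  "Xpmf N p = Pi_pmf {1..N} False (\<lambda>_. bernoulli_pmf p)"

definition VarT :: "nat \<Rightarrow> nat \<Rightarrow> (nat \<Rightarrow> nat \<Rightarrow> bool) \<Rightarrow> (nat \<Rightarrow> nat \<Rightarrow> bool) \<Rightarrow> real \<Rightarrow> real" where
  "VarT N k adjH adjG p = measure_pmf.variance (Xpmf N p) (TH N k adjH adjG)"

definition CM :: "nat \<Rightarrow> nat \<Rightarrow> (nat \<Rightarrow> nat \<Rightarrow> bool) \<Rightarrow> (nat \<Rightarrow> nat \<Rightarrow> bool) \<Rightarrow> real \<Rightarrow> real \<Rightarrow> nat set \<Rightarrow> bool" where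
  "CM N k adjH adjG p M A \<longleftrightarrow>
     (tH N k adjH adjG A)\<^sup>2 > M * p powi (2 * int (card A) - 2 * int k) * VarT N k adjH adjG p"

definition goodM :: "nat \<Rightarrow> nat \<Rightarrow> (nat \<Rightarrow> nat \<Rightarrow> bool) \<Rightarrow> (nat \<Rightarrow> nat \<Rightarrow> bool) \<Rightarrow> real \<Rightarrow> real \<Rightarrow> (nat \<Rightarrow> nat) \<Rightarrow> bool" where
  "goodM N k adjH adjG p M s \<longleftrightarrow>
     (\<forall>A. A \<noteq> {} \<and> A \<subseteq> s ` {0..<k} \<longrightarrow> \<not> CM N k adjH adjG p M A)"

definition TMo :: "nat \<Rightarrow> nat \<Rightarrow> (nat \<Rightarrow> nat \<Rightarrow> bool) \<Rightarrow> (nat \<Rightarrow> nat \<Rightarrow> bool) \<Rightarrow> real \<Rightarrow> real \<Rightarrow> (nat \<Rightarrow> bool) \<Rightarrow> real" where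
  "TMo N k adjH adjG p M \<omega> = (1 / nAut k adjH) *
     (\<Sum>s\<in>vtuples N k. MH k adjH adjG s * Xs k \<omega> s * (if goodM N k adjH adjG p M s then 1 else 0))"

end

theory Submission
  imports Defs
begin

(* Write T = c * sum_s M_H(s) X_s with c = 1/|Aut(H)|. In the variance, a pair of copies (s, s')
   whose vertex sets overlap in I contributes c^2 M_H(s) M_H(s') p^(2k-|I|) (1 - p^|I|), and
   (1 - p) p^(2k-|A|) <= (1 - p^|I|) p^(2k-|I|) for each of the 2^|I| - 1 nonempty A inside I;
   regrouping by A gives (1 - p) * sum_{A nonempty} t_H(A)^2 p^(2k-|A|) <= (2^k - 1) Var T.
   T and T_M^o differ only if all vertices of some set A satisfying C_M(A) are present. For such A
   we have p^|A| < t_H(A)^2 p^(2k-|A|) / (M Var T), so a union bound gives (a). Similarly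
   E|T - T_M^o| <= p^k sum_A t_H(A) over the same sets, and p^k t_H(A) < t_H(A)^2 p^(2k-|A|) / sqrt (M Var T),
   which gives (b). *)

definition Xset :: "nat set \<Rightarrow> (nat \<Rightarrow> bool) \<Rightarrow> real" where
  "Xset J \<omega> = of_bool (\<forall>v\<in>J. \<omega> v)"

lemma Xset_nonneg: "0 \<le> Xset J \<omega>"
  by (simp add: Xset_def)

lemma Xset_mult: "Xset J \<omega> * Xset J' \<omega> = Xset (J \<union> J') \<omega>"
  by (auto simp: Xset_def)

lemma Xs_eq_Xset: "Xs k \<omega> s = Xset (s ` {0..<k}) \<omega>"
  by (induction k) (auto simp: Xs_def Xset_def lessThan_Suc atLeast0_lessThan_Suc)

lemma finite_set_pmf_Xpmf: "finite (set_pmf (Xpmf N p))"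
proof (rule finite_subset)
  show "set_pmf (Xpmf N p) \<subseteq> PiE_dflt {1..N} False (\<lambda>_. UNIV)"
    unfolding Xpmf_def using set_Pi_pmf_subset[of "{1..N}" False] by (auto simp: PiE_dflt_def)
qed (rule finite_PiE_dflt; simp)

lemma integrable_Xpmf [simp]: "integrable (measure_pmf (Xpmf N p)) (f :: _ \<Rightarrow> real)"
  by (rule integrable_measure_pmf_finite[OF finite_set_pmf_Xpmf])

lemma prob_Xpmf_all_true:
  assumes "J \<subseteq> {1..N}" "0 \<le> p" "p \<le> 1"
  shows "measure_pmf.prob (Xpmf N p) {\<omega>. \<forall>v\<in>J. \<omega> v} = p ^ card J"
proof -
  have "{\<omega>. \<forall>v\<in>J. \<omega> v} = Pi {1..N} (\<lambda>v. if v \<in> J then {True} else UNIV)"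
    using assms(1) by (auto simp: Pi_def)
  then have "measure_pmf.prob (Xpmf N p) {\<omega>. \<forall>v\<in>J. \<omega> v}
      = (\<Prod>v\<in>{1..N}. measure_pmf.prob (bernoulli_pmf p) (if v \<in> J then {True} else UNIV))"
    unfolding Xpmf_def by (simp add: measure_Pi_pmf_Pi)
  also have "\<dots> = (\<Prod>v\<in>{1..N}. if v \<in> J then p else 1)"
    by (intro prod.cong) (auto simp: measure_pmf_single assms)
  also have "\<dots> = p ^ card J"
    using assms(1) by (simp add: prod.If_cases Int_absorb1)
  finally show ?thesis .
qed

lemma expectation_Xset:
  assumes "J \<subseteq> {1..N}" "0 \<le> p" "p \<le> 1"
  shows "measure_pmf.expectation (Xpmf N p) (Xset J) = p ^ card J"
proof -
  have "Xset J = indicator {\<omega>. \<forall>v\<in>J. \<omega> v}"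
    by (auto simp: Xset_def indicator_def)
  then show ?thesis
    using prob_Xpmf_all_true[OF assms] by simp
qed

lemma finite_vtuples [simp]: "finite (vtuples N k)"
proof (rule finite_subset)
  show "vtuples N k \<subseteq> {0..<k} \<rightarrow>\<^sub>E {1..N}"
    unfolding vtuples_def by auto
qed (simp add: finite_PiE)

lemma vtuples_image_subset: "s \<in> vtuples N k \<Longrightarrow> s ` {0..<k} \<subseteq> {1..N}"
  unfolding vtuples_def by auto

lemma card_vtuples_image: "s \<in> vtuples N k \<Longrightarrow> card (s ` {0..<k}) = k"
  unfolding vtuples_def by (simp add: card_image)

lemma MH_nonneg: "0 \<le> MH k adjH adjG s"
  unfolding MH_def by (auto intro!: prod_nonneg simp: adjmat_def)

lemma sum_nonempty_subsets_power_le: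
  fixes p :: real
  assumes "finite I" "card I \<le> k" "0 \<le> p" "p \<le> 1"
  shows "(1 - p) * (\<Sum>A\<in>Pow I - {{}}. p ^ (2*k - card A)) \<le> (2^k - 1) * (p ^ (2*k - card I) - p ^ (2*k))"
proof -
  let ?m = "card I"
  have gap: "p ^ (2*k - ?m) - p ^ (2*k) = p ^ (2*k - ?m) * (1 - p ^ ?m)"
    using assms(2) by (simp add: right_diff_distrib flip: power_add)
  have "(1 - p) * p ^ (2*k - card A) \<le> p ^ (2*k - ?m) - p ^ (2*k)" if "A \<in> Pow I - {{}}" for A
  proof -
    have "card A \<le> ?m" "0 < card A"
      using that assms(1) by (auto intro: card_mono simp: card_gt_0_iff finite_subset)
    have "p ^ ?m \<le> p ^ 1"
      using \<open>card A \<le> ?m\<close> \<open>0 < card A\<close> assms(3,4) by (intro power_decreasing) auto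
    moreover have "p ^ (2*k - card A) \<le> p ^ (2*k - ?m)"
      using \<open>card A \<le> ?m\<close> assms(3,4) by (intro power_decreasing) auto
    ultimately have "p ^ (2*k - card A) * (1 - p) \<le> p ^ (2*k - ?m) * (1 - p ^ ?m)"
      using assms(3,4) by (intro mult_mono) auto
    then show ?thesis
      unfolding gap by (simp add: mult.commute)
  qed
  then have "(1 - p) * (\<Sum>A\<in>Pow I - {{}}. p ^ (2*k - card A)) \<le> real (card (Pow I - {{}})) * (p ^ (2*k - ?m) - p ^ (2*k))"
    unfolding sum_distrib_left by (rule sum_bounded_above)
  also have "\<dots> \<le> (2^k - 1) * (p ^ (2*k - ?m) - p ^ (2*k))"
  proof (rule mult_right_mono)
    show "real (card (Pow I - {{}})) \<le> 2^k - 1"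
      using assms(1,2) by (simp add: card_Diff_singleton card_Pow of_nat_diff power_increasing)
    show "0 \<le> p ^ (2*k - ?m) - p ^ (2*k)"
      unfolding gap using assms(3,4) by (simp add: power_le_one)
  qed
  finally show ?thesis .
qed

locale bernoulli_subgraph_count =
  fixes N k :: nat and adjH adjG :: "nat \<Rightarrow> nat \<Rightarrow> bool" and p :: real
  assumes p_nonneg: "0 \<le> p" and p_le_1: "p \<le> 1"
begin

abbreviation "P \<equiv> Xpmf N p"
abbreviation "tuples \<equiv> vtuples N k"
abbreviation img :: "(nat \<Rightarrow> nat) \<Rightarrow> nat set" where "img s \<equiv> s ` {0..<k}"
abbreviation "w \<equiv> MH k adjH adjG"
abbreviation "T \<equiv> TH N k adjH adjG"
abbreviation "t \<equiv> tH N k adjH adjG"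
abbreviation "V \<equiv> VarT N k adjH adjG p"

definition c :: real where "c = 1 / nAut k adjH"

lemma c_nonneg: "0 \<le> c"
  by (simp add: c_def nAut_def)

lemma TH_eq: "T \<omega> = c * (\<Sum>s\<in>tuples. w s * Xset (img s) \<omega>)"
  by (simp add: TH_def c_def Xs_eq_Xset)

lemma tH_eq: "t A = c * (\<Sum>s\<in>tuples. of_bool (A \<subseteq> img s) * w s)"
  by (simp add: tH_def c_def Collect_conj_eq Int_commute)

lemma tH_nonneg: "0 \<le> t A"
  by (simp add: tH_def nAut_def sum_nonneg MH_nonneg)

lemma expectation_Xset_union_img:
  assumes "s \<in> tuples" "s' \<in> tuples"
  shows "measure_pmf.expectation P (Xset (img s \<union> img s')) = p ^ card (img s \<union> img s')"
proof -
  have "img s \<union> img s' \<subseteq> {1..N}"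
    using assms by (blast dest: vtuples_image_subset)
  then show ?thesis
    by (rule expectation_Xset[OF _ p_nonneg p_le_1])
qed

lemma expectation_Xset_tuple: "s \<in> tuples \<Longrightarrow> measure_pmf.expectation P (Xset (img s)) = p ^ k"
  using expectation_Xset_union_img[of s s] card_vtuples_image[of s] by simp

lemma expectation_TH: "measure_pmf.expectation P T = c * (\<Sum>s\<in>tuples. w s * p ^ k)"
  by (simp add: TH_eq[abs_def] expectation_Xset_tuple cong: sum.cong)

lemma expectation_TH_sq:
  "measure_pmf.expectation P (\<lambda>\<omega>. (T \<omega>)\<^sup>2)
     = c\<^sup>2 * (\<Sum>s\<in>tuples. \<Sum>s'\<in>tuples. w s * w s' * p ^ card (img s \<union> img s'))"
proof -
  have "(T \<omega>)\<^sup>2 = c\<^sup>2 * (\<Sum>s\<in>tuples. \<Sum>s'\<in>tuples. w s * w s' * Xset (img s \<union> img s') \<omega>)" for \<omega>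
    by (simp add: TH_eq power2_eq_square sum_product flip: Xset_mult) (simp add: mult_ac)
  then show ?thesis
    by (simp add: expectation_Xset_union_img cong: sum.cong)
qed

lemma VarT_eq:
  "V = c\<^sup>2 * (\<Sum>s\<in>tuples. \<Sum>s'\<in>tuples. w s * w s' * (p ^ card (img s \<union> img s') - p ^ (2*k)))"
proof -
  have "V = measure_pmf.expectation P (\<lambda>\<omega>. (T \<omega>)\<^sup>2) - (measure_pmf.expectation P T)\<^sup>2"
    unfolding VarT_def by (rule measure_pmf.variance_eq) simp_all
  also have "(measure_pmf.expectation P T)\<^sup>2 = c\<^sup>2 * (\<Sum>s\<in>tuples. \<Sum>s'\<in>tuples. w s * w s' * p ^ (2*k))"
  proof -
    have "p ^ (2*k) = p ^ k * p ^ k"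
      by (simp add: mult_2 power_add)
    then show ?thesis
      by (simp add: expectation_TH power2_eq_square sum_product mult_ac)
  qed
  finally show ?thesis
    by (simp add: expectation_TH_sq right_diff_distrib sum_subtractf)
qed

lemma sum_tH_sq_eq:
  "(\<Sum>A\<in>Pow {1..N} - {{}}. (t A)\<^sup>2 * p ^ (2*k - card A))
     = c\<^sup>2 * (\<Sum>s\<in>tuples. \<Sum>s'\<in>tuples. w s * w s' * (\<Sum>A\<in>Pow (img s \<inter> img s') - {{}}. p ^ (2*k - card A)))"
proof -
  let ?f = "\<lambda>A. p ^ (2*k - card A)"
  let ?g = "\<lambda>s s' A. c\<^sup>2 * w s * w s' * (of_bool (A \<subseteq> img s \<inter> img s') * ?f A)"
  have "(t A)\<^sup>2 * ?f A = (\<Sum>s\<in>tuples. \<Sum>s'\<in>tuples. ?g s s' A)" for A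
    unfolding tH_eq power2_eq_square sum_product
    by (simp del: sum_mult_of_bool_eq sum_of_bool_mult_eq add: of_bool_conj sum_distrib_left sum_distrib_right mult_ac)
  then have "(\<Sum>A\<in>Pow {1..N} - {{}}. (t A)\<^sup>2 * ?f A) = (\<Sum>A\<in>Pow {1..N} - {{}}. \<Sum>s\<in>tuples. \<Sum>s'\<in>tuples. ?g s s' A)"
    by (simp only:)
  also have "\<dots> = (\<Sum>s\<in>tuples. \<Sum>s'\<in>tuples. \<Sum>A\<in>Pow {1..N} - {{}}. ?g s s' A)"
    by (simp only: sum.swap[of _ "Pow {1..N} - {{}}"])
  also have "\<dots> = (\<Sum>s\<in>tuples. \<Sum>s'\<in>tuples. c\<^sup>2 * w s * w s' * (\<Sum>A\<in>Pow (img s \<inter> img s') - {{}}. ?f A))"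
  proof (intro sum.cong refl)
    fix s s' assume "s \<in> tuples"
    then have "(Pow {1..N} - {{}}) \<inter> {A. A \<subseteq> img s \<inter> img s'} = Pow (img s \<inter> img s') - {{}}"
      using vtuples_image_subset by blast
    then show "(\<Sum>A\<in>Pow {1..N} - {{}}. ?g s s' A) = c\<^sup>2 * w s * w s' * (\<Sum>A\<in>Pow (img s \<inter> img s') - {{}}. ?f A)"
      by (simp only: sum_distrib_left[symmetric] sum_of_bool_mult_eq finite_Diff finite_Pow_iff finite_atLeastAtMost)
  qed
  finally show ?thesis
    by (simp add: sum_distrib_left mult.assoc)
qed

lemma sum_tH_sq_le_VarT:
  "(1 - p) * (\<Sum>A\<in>Pow {1..N} - {{}}. (t A)\<^sup>2 * p ^ (2*k - card A)) \<le> (2^k - 1) * V"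
proof -
  have "(1 - p) * (\<Sum>A\<in>Pow (img s \<inter> img s') - {{}}. p ^ (2*k - card A))
      \<le> (2^k - 1) * (p ^ card (img s \<union> img s') - p ^ (2*k))" if "s \<in> tuples" "s' \<in> tuples" for s s'
  proof -
    have "card (img s \<union> img s') + card (img s \<inter> img s') = k + k"
      using card_Un_Int[of "img s" "img s'"] card_vtuples_image that by simp
    moreover have "card (img s \<inter> img s') \<le> k"
      using card_mono[of "img s" "img s \<inter> img s'"] card_vtuples_image[OF that(1)] by simp
    ultimately have "card (img s \<union> img s') = 2*k - card (img s \<inter> img s')"
      by linarith
    then show ?thesis
      using sum_nonempty_subsets_power_le[of "img s \<inter> img s'" k p] p_nonneg p_le_1
        \<open>card (img s \<inter> img s') \<le> k\<close> by simp
  qed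
  then have "c\<^sup>2 * (\<Sum>s\<in>tuples. \<Sum>s'\<in>tuples. w s * w s' * ((1 - p) * (\<Sum>A\<in>Pow (img s \<inter> img s') - {{}}. p ^ (2*k - card A))))
      \<le> c\<^sup>2 * (\<Sum>s\<in>tuples. \<Sum>s'\<in>tuples. w s * w s' * ((2^k - 1) * (p ^ card (img s \<union> img s') - p ^ (2*k))))"
    by (intro mult_left_mono sum_mono) (simp_all add: MH_nonneg)
  then have "(1 - p) * (\<Sum>A\<in>Pow {1..N} - {{}}. (t A)\<^sup>2 * p ^ (2*k - card A))
      \<le> c\<^sup>2 * (\<Sum>s\<in>tuples. \<Sum>s'\<in>tuples. w s * w s' * ((2^k - 1) * (p ^ card (img s \<union> img s') - p ^ (2*k))))"
    unfolding sum_tH_sq_eq by (simp add: sum_distrib_left mult_ac)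
  also have "\<dots> = (2^k - 1) * V"
    by (simp add: VarT_eq sum_distrib_left mult_ac)
  finally show ?thesis .
qed

definition violating :: "real \<Rightarrow> nat set set" where
  "violating M = {A \<in> Pow {1..N} - {{}}. CM N k adjH adjG p M A}"

lemma finite_violating: "finite (violating M)"
  unfolding violating_def by simp

lemma not_goodM_imp_violating_subset:
  assumes "s \<in> tuples" "\<not> goodM N k adjH adjG p M s"
  obtains A where "A \<in> violating M" "A \<subseteq> img s"
proof -
  obtain A where A: "A \<noteq> {}" "A \<subseteq> img s" "CM N k adjH adjG p M A"
    using assms(2) unfolding goodM_def by blast
  then have "A \<in> violating M"
    using vtuples_image_subset[OF assms(1)] unfolding violating_def by blast
  then show thesis
    using A(2) by (rule that)
qed

lemma card_le_if_tH_nonzero: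
  assumes "t A \<noteq> 0"
  shows "card A \<le> k"
proof -
  have "{s \<in> tuples. A \<subseteq> img s} \<noteq> {}"
  proof
    assume "{s \<in> tuples. A \<subseteq> img s} = {}"
    then have "t A = 0"
      unfolding tH_def by (simp only: sum.empty mult_zero_right)
    with assms show False ..
  qed
  then obtain s where "s \<in> tuples" "A \<subseteq> img s"
    by blast
  then have "card A \<le> card (img s)"
    by (intro card_mono) auto
  with \<open>s \<in> tuples\<close> show ?thesis
    by (simp add: card_vtuples_image)
qed

lemma CM_iff_power:
  assumes "0 < p" "card A \<le> k"
  shows "CM N k adjH adjG p M A \<longleftrightarrow> M * V * p ^ card A < (t A)\<^sup>2 * p ^ (2*k - card A)"
proof -
  have exponent: "2 * int (card A) - 2 * int k = int (card A) - int (2*k - card A)"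
    using assms(2) by simp
  have "p powi (2 * int (card A) - 2 * int k) = p ^ card A / p ^ (2*k - card A)"
    unfolding exponent using assms(1) by (subst power_int_diff) (auto simp: power_int_of_nat)
  then show ?thesis
    using assms(1) by (simp add: CM_def pos_divide_less_eq mult_ac)
qed

lemma violating_lower_bound:
  assumes "0 < p" "0 < M" "0 < V" "A \<in> violating M"
  shows "card A \<le> k" "M * V * p ^ card A < (t A)\<^sup>2 * p ^ (2*k - card A)"
proof -
  have CM: "CM N k adjH adjG p M A"
    using assms(4) by (simp add: violating_def)
  moreover have "0 < M * p powi (2 * int (card A) - 2 * int k) * V"
    using assms(1-3) by simp
  ultimately have "t A \<noteq> 0"
    unfolding CM_def by auto
  then show "card A \<le> k"
    by (rule card_le_if_tH_nonzero)
  then show "M * V * p ^ card A < (t A)\<^sup>2 * p ^ (2*k - card A)"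
    using CM CM_iff_power assms(1) by blast
qed

lemma sum_violating_le:
  assumes "p < 1" "0 < D" "\<And>A. A \<in> violating M \<Longrightarrow> f A \<le> (t A)\<^sup>2 * p ^ (2*k - card A) / D"
  shows "(\<Sum>A\<in>violating M. f A) \<le> (2^k - 1) * V / ((1 - p) * D)"
proof -
  have "(\<Sum>A\<in>violating M. f A) \<le> (\<Sum>A\<in>violating M. (t A)\<^sup>2 * p ^ (2*k - card A) / D)"
    using assms(3) by (rule sum_mono)
  also have "\<dots> \<le> (\<Sum>A\<in>Pow {1..N} - {{}}. (t A)\<^sup>2 * p ^ (2*k - card A) / D)"
    using assms(2) p_nonneg by (intro sum_mono2) (auto simp: violating_def)
  also have "\<dots> = (\<Sum>A\<in>Pow {1..N} - {{}}. (t A)\<^sup>2 * p ^ (2*k - card A)) / D"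
    by (simp add: sum_divide_distrib)
  also have "\<dots> \<le> (2^k - 1) * V / (1 - p) / D"
    using sum_tH_sq_le_VarT assms(1,2) by (intro divide_right_mono) (simp_all add: field_simps)
  finally show ?thesis
    by simp
qed

lemma TH_minus_TMo:
  "T \<omega> - TMo N k adjH adjG p M \<omega>
     = c * (\<Sum>s\<in>{s\<in>tuples. \<not> goodM N k adjH adjG p M s}. w s * Xset (img s) \<omega>)"
proof -
  have "T \<omega> - TMo N k adjH adjG p M \<omega> = c * (\<Sum>s\<in>tuples.
      w s * Xset (img s) \<omega> - w s * Xset (img s) \<omega> * (if goodM N k adjH adjG p M s then 1 else 0))"
    by (simp add: TH_def TMo_def c_def Xs_eq_Xset sum_subtractf right_diff_distrib)
  also have "\<dots> = c * (\<Sum>s\<in>tuples. if \<not> goodM N k adjH adjG p M s then w s * Xset (img s) \<omega> else 0)"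
    by (intro arg_cong[where f="(*) c"] sum.cong) auto
  finally show ?thesis
    by (simp only: sum.inter_filter finite_vtuples)
qed

lemma abs_TH_minus_TMo:
  "\<bar>T \<omega> - TMo N k adjH adjG p M \<omega>\<bar>
     = c * (\<Sum>s\<in>{s\<in>tuples. \<not> goodM N k adjH adjG p M s}. w s * Xset (img s) \<omega>)"
  unfolding TH_minus_TMo using c_nonneg MH_nonneg Xset_nonneg
  by (simp add: sum_nonneg)

lemma TH_ne_TMo_imp_violating:
  assumes "T \<omega> \<noteq> TMo N k adjH adjG p M \<omega>"
  shows "\<exists>A\<in>violating M. \<forall>v\<in>A. \<omega> v"
proof -
  have "(\<Sum>s\<in>{s\<in>tuples. \<not> goodM N k adjH adjG p M s}. w s * Xset (img s) \<omega>) \<noteq> 0"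
    using assms TH_minus_TMo[of \<omega> M] by auto
  then obtain s where "s \<in> {s\<in>tuples. \<not> goodM N k adjH adjG p M s}" "w s * Xset (img s) \<omega> \<noteq> 0"
    by (rule sum.not_neutral_contains_not_neutral)
  then have s: "s \<in> tuples" "\<not> goodM N k adjH adjG p M s" "Xset (img s) \<omega> \<noteq> 0"
    by auto
  obtain A where "A \<in> violating M" "A \<subseteq> img s"
    by (rule not_goodM_imp_violating_subset[OF s(1,2)])
  moreover have "\<forall>v\<in>A. \<omega> v"
    using s(3) \<open>A \<subseteq> img s\<close> by (auto simp: Xset_def)
  ultimately show ?thesis
    by blast
qed

lemma prob_TH_ne_TMo_le:
  assumes "0 < p" "p < 1" "0 < M" "0 < V"
  shows "measure_pmf.prob P {\<omega>. T \<omega> \<noteq> TMo N k adjH adjG p M \<omega>} \<le> (2^k - 1) / (M * (1 - p))"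
proof -
  have "measure_pmf.prob P {\<omega>. T \<omega> \<noteq> TMo N k adjH adjG p M \<omega>}
      \<le> measure_pmf.prob P (\<Union>A\<in>violating M. {\<omega>. \<forall>v\<in>A. \<omega> v})"
    using TH_ne_TMo_imp_violating by (intro measure_pmf.finite_measure_mono) auto
  also have "\<dots> \<le> (\<Sum>A\<in>violating M. measure_pmf.prob P {\<omega>. \<forall>v\<in>A. \<omega> v})"
    using finite_violating by (intro measure_pmf.finite_measure_subadditive_finite) auto
  also have "\<dots> = (\<Sum>A\<in>violating M. p ^ card A)"
    using p_nonneg p_le_1 by (intro sum.cong refl prob_Xpmf_all_true) (auto simp: violating_def)
  also have "\<dots> \<le> (2^k - 1) * V / ((1 - p) * (M * V))"
  proof (rule sum_violating_le)
    fix A assume "A \<in> violating M"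
    then have "M * V * p ^ card A \<le> (t A)\<^sup>2 * p ^ (2*k - card A)"
      using violating_lower_bound(2)[OF assms(1,3,4)] by (simp add: less_imp_le)
    then show "p ^ card A \<le> (t A)\<^sup>2 * p ^ (2*k - card A) / (M * V)"
      using assms(3,4) by (simp add: field_simps)
  qed (use assms in simp_all)
  also have "\<dots> = (2^k - 1) / (M * (1 - p))"
    using assms(4) by simp
  finally show ?thesis .
qed

lemma tH_le_if_violating:
  assumes "0 < p" "0 < M" "0 < V" "A \<in> violating M"
  shows "p ^ k * t A \<le> (t A)\<^sup>2 * p ^ (2*k - card A) / sqrt (M * V)"
proof -
  define a where "a = card A"
  define x where "x = t A * p ^ (k - a)"
  have "a \<le> k" and bound: "M * V * p ^ a < (t A)\<^sup>2 * p ^ (2*k - a)"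
    using violating_lower_bound[OF assms] unfolding a_def by auto
  have x_nonneg: "0 \<le> x"
    unfolding x_def using tH_nonneg p_nonneg by simp
  have sq: "(t A)\<^sup>2 * p ^ (2*k - a) = x * x * p ^ a"
    and lin: "p ^ k * t A = x * p ^ a"
    using \<open>a \<le> k\<close> unfolding x_def power2_eq_square
    by (simp_all add: mult_ac flip: power_add) (simp_all add: mult_2 mult_2_right)
  have "M * V < x * x"
    using bound assms(1) unfolding sq by simp
  then have "sqrt (M * V) < x"
    using x_nonneg real_sqrt_less_mono[of "M * V" "x * x"] by simp
  then have "x * p ^ a * sqrt (M * V) \<le> x * p ^ a * x"
    using x_nonneg p_nonneg by (intro mult_left_mono) auto
  then have "p ^ k * t A * sqrt (M * V) \<le> (t A)\<^sup>2 * p ^ (2*k - a)"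
    unfolding sq lin by (simp add: mult_ac)
  then show ?thesis
    using assms(2,3) by (simp add: a_def pos_le_divide_eq)
qed

lemma expectation_abs_TH_minus_TMo:
  "measure_pmf.expectation P (\<lambda>\<omega>. \<bar>T \<omega> - TMo N k adjH adjG p M \<omega>\<bar>)
     = c * (\<Sum>s\<in>{s\<in>tuples. \<not> goodM N k adjH adjG p M s}. w s * p ^ k)"
proof -
  have "measure_pmf.expectation P (Xset (img s)) = p ^ k"
    if "s \<in> {s\<in>tuples. \<not> goodM N k adjH adjG p M s}" for s
    using that by (simp add: expectation_Xset_tuple)
  then show ?thesis
    by (simp add: abs_TH_minus_TMo[abs_def])
qed

lemma expectation_abs_TH_minus_TMo_le_sum_tH:
  "measure_pmf.expectation P (\<lambda>\<omega>. \<bar>T \<omega> - TMo N k adjH adjG p M \<omega>\<bar>) \<le> p ^ k * (\<Sum>A\<in>violating M. t A)"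
proof -
  let ?bad = "{s\<in>tuples. \<not> goodM N k adjH adjG p M s}"
  let ?n = "\<lambda>s. \<Sum>A\<in>violating M. of_bool (A \<subseteq> img s) :: real"
  have "w s * p ^ k \<le> w s * p ^ k * ?n s" if "s \<in> ?bad" for s
  proof -
    from that have "s \<in> tuples" "\<not> goodM N k adjH adjG p M s"
      by auto
    then obtain A where "A \<in> violating M" "A \<subseteq> img s"
      by (rule not_goodM_imp_violating_subset)
    then have "of_bool (A \<subseteq> img s) \<le> ?n s"
      by (intro member_le_sum) (simp_all add: finite_violating)
    then have "1 \<le> ?n s"
      using \<open>A \<subseteq> img s\<close> by simp
    then show ?thesis
      using mult_left_mono[of 1 "?n s" "w s * p ^ k"] MH_nonneg p_nonneg by simp
  qed
  then have "(\<Sum>s\<in>?bad. w s * p ^ k) \<le> (\<Sum>s\<in>?bad. w s * p ^ k * ?n s)"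
    by (rule sum_mono)
  also have "\<dots> \<le> (\<Sum>s\<in>tuples. w s * p ^ k * ?n s)"
    using MH_nonneg p_nonneg by (intro sum_mono2) (auto intro!: mult_nonneg_nonneg sum_nonneg)
  finally have "c * (\<Sum>s\<in>?bad. w s * p ^ k) \<le> c * (\<Sum>s\<in>tuples. w s * p ^ k * ?n s)"
    using c_nonneg by (rule mult_left_mono)
  also have "\<dots> = p ^ k * (\<Sum>A\<in>violating M. t A)"
    by (simp del: sum_of_bool_eq sum_mult_of_bool_eq sum_of_bool_mult_eq
        add: tH_eq sum_distrib_left sum_distrib_right sum.swap[of _ tuples] mult_ac)
  finally show ?thesis
    unfolding expectation_abs_TH_minus_TMo .
qed

lemma expectation_abs_TH_minus_TMo_le:
  assumes "0 < p" "p < 1" "0 < M" "0 < V"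
  shows "1 / sqrt V * measure_pmf.expectation P (\<lambda>\<omega>. \<bar>T \<omega> - TMo N k adjH adjG p M \<omega>\<bar>)
           \<le> (2^k - 1) / (sqrt M * (1 - p))"
proof -
  have "p ^ k * (\<Sum>A\<in>violating M. t A) \<le> (2^k - 1) * V / ((1 - p) * sqrt (M * V))"
    unfolding sum_distrib_left
    by (rule sum_violating_le) (use assms tH_le_if_violating in simp_all)
  with expectation_abs_TH_minus_TMo_le_sum_tH
  have "1 / sqrt V * measure_pmf.expectation P (\<lambda>\<omega>. \<bar>T \<omega> - TMo N k adjH adjG p M \<omega>\<bar>)
      \<le> 1 / sqrt V * ((2^k - 1) * V / ((1 - p) * sqrt (M * V)))"
    using assms(4) by (intro mult_left_mono) (auto intro: order_trans)
  also have "\<dots> = (2^k - 1) / (sqrt M * (1 - p))"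
  proof -
    have "sqrt V * sqrt V = V"
      using assms(4) by simp
    then show ?thesis
      using assms by (simp add: real_sqrt_mult field_simps)
  qed
  finally show ?thesis .
qed

end

theorem lemma5p2:
  fixes k N :: nat and adjH adjG :: "nat \<Rightarrow> nat \<Rightarrow> bool" and p M :: real
  assumes H: "simple_graph {0..<k} adjH" "connected_graph {0..<k} adjH"
    and G: "simple_graph {1..N} adjG"
    and p: "0 < p" "p < 1"
    and var: "VarT N k adjH adjG p > 0"
    and M: "M > 0"
  shows "measure_pmf.prob (Xpmf N p) {\<omega>. TH N k adjH adjG \<omega> \<noteq> TMo N k adjH adjG p M \<omega>}
           \<le> (2 ^ k - 1) / (M * (1 - p)) \<and>
         (1 / sqrt (VarT N k adjH adjG p)) *
           measure_pmf.expectation (Xpmf N p) (\<lambda>\<omega>. \<bar>TH N k adjH adjG \<omega> - TMo N k adjH adjG p M \<omega>\<bar>)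
           \<le> (2 ^ k - 1) / (sqrt M * (1 - p))"
proof -
  interpret bernoulli_subgraph_count N k adjH adjG p
    using p by unfold_locales simp_all
  show ?thesis
    using prob_TH_ne_TMo_le expectation_abs_TH_minus_TMo_le p var M by simp
qed

end
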